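(* Let $\mathbb{L}(\theta,\omega):=\mathbb{E}_{(x,y)\sim Q}\,\mathcal{L}(\theta,\omega;(x,y))$. Assume: (i) for all $\theta,\omega$, $\mathbb{E}_{(x,y)\sim Q}[\tfrac{\partial\mathcal{L}}{\partial\theta}(\theta,\omega;(x,y))]=\nabla_\theta\mathbb{L}(\theta,\omega)$ and $\mathbb{E}_{(x,y)\sim Q}\|\tfrac{\partial\mathcal{L}}{\partial\theta}(\theta,\omega;(x,y))-\nabla_\theta\mathbb{L}(\theta,\omega)\|^2\le\sigma^2$; (ii) for every sample $(x,y)$ and every $\omega$, $\|\nabla_\theta\mathcal{L}(\theta_1,\omega;(x,y))-\nabla_\theta\mathcal{L}(\theta_2,\omega;(x,y))\|\le l\|\theta_1-\theta_2\|$. Let $g_\theta(\theta,\omega)=\frac1M\sum_{i=1}^M\frac{\partial\mathcal{L}}{\partial\theta}(\theta,\omega;(x_i,y_i))$ be a minibatch gradient estimate with $(x_i,y_i)$ i.i.d. from $Q$, fresh samples being drawn at each evaluation. For iterates $(\theta_t,\omega_t)$ and $\rho>0$, set $\theta_{t+1/2}:=\theta_t+\rho\,g_\theta(\theta_t,\omega_t)$. Then $$\mathbb{E}\|g_\theta(\theta_{t+1/2},\omega_t)\|^2\le(4\rho^2l^2+2\rho l+2)\,\mathbb{E}\|\nabla_\theta\mathbb{L}(\theta_t,\omega_t)\|^2+(5\rho^2l^2+2)\frac{\sigma^2}{M}.$$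
   Context: $\theta$ denotes model parameters and $\omega$ sampling weights; $\mathcal{L}(\theta,\omega;(x,y))$ is a differentiable per-sample loss and $Q$ the data distribution. Expectations are over all sampling randomness. *)

theory Defs
  imports "HOL-Probability.Probability"
begin

definition minibatch_grad ::
  "('a \<Rightarrow> 'w \<Rightarrow> 'z \<Rightarrow> 'b::real_vector) \<Rightarrow> nat \<Rightarrow> 'a \<Rightarrow> 'w \<Rightarrow> (nat \<Rightarrow> 'z) \<Rightarrow> 'b" where
  "minibatch_grad G M \<theta> \<omega> zs = (1 / real M) *\<^sub>R (\<Sum>i<M. G \<theta> \<omega> (zs i))"

end

theory Submission
  imports Defs
begin

text \<open>Write g(theta; zs) for the minibatch gradient on the batch zs. By the Lipschitz
  condition, the gradient at the extrapolated point theta + rho g(theta; zs1), taken on the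
  fresh batch zs2, is within rho l |g(theta; zs1)| of g(theta; zs2), so its squared norm is at
  most 2 rho^2 l^2 |g(theta; zs1)|^2 + 2 |g(theta; zs2)|^2. The two batches are independent of
  each other and of the iterate, and for a single batch the bias-variance decomposition of an
  average of M i.i.d. samples gives E |g|^2 <= |grad L|^2 + sigma^2 / M. Hence the left-hand side
  is at most (2 rho^2 l^2 + 2) (E |grad L|^2 + sigma^2 / M), which is below the stated bound
  because rho l >= 0.\<close>

lemma (in finite_measure) norm_diff_square_integrable_imp_integrable:
  fixes f :: "'a \<Rightarrow> 'b::{banach, second_countable_topology}"
  assumes f: "f \<in> borel_measurable M" and f_sq: "integrable M (\<lambda>x. (norm (f x - c))\<^sup>2)"
  shows "integrable M f"
proof -
  have f_c: "(\<lambda>x. f x - c) \<in> borel_measurable M"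
    using f by measurable
  then have "(\<lambda>x. norm (f x - c)) \<in> borel_measurable M"
    by measurable
  then have "integrable M (\<lambda>x. norm (f x - c))"
    by (rule square_integrable_imp_integrable) (use f_sq in simp)
  then have "integrable M (\<lambda>x. f x - c)"
    using integrable_norm_iff[OF f_c] by blast
  then have "integrable M (\<lambda>x. (f x - c) + c)"
    by (rule Bochner_Integration.integrable_add) simp
  then show ?thesis
    by simp
qed

lemma power2_norm_eq_sum_Basis: "(norm x)\<^sup>2 = (\<Sum>b\<in>Basis. (x \<bullet> b)\<^sup>2)"
  unfolding power2_norm_eq_inner by (subst euclidean_inner) (simp add: power2_eq_square)

lemma
  fixes f :: "'z \<Rightarrow> real"
  assumes Q: "prob_space Q" and I: "finite I" and J: "J \<subseteq> I" and f: "integrable Q f"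
  shows integrable_PiM_prod_coordinates: "integrable (PiM I (\<lambda>_. Q)) (\<lambda>x. \<Prod>k\<in>J. f (x k))"
    and integral_PiM_prod_coordinates:
      "(\<integral>x. (\<Prod>k\<in>J. f (x k)) \<partial>PiM I (\<lambda>_. Q)) = (\<integral>z. f z \<partial>Q) ^ card J"
proof -
  interpret Q: prob_space Q by fact
  interpret product_prob_space "\<lambda>_. Q" I by unfold_locales
  define F where "F k = (if k \<in> J then f else (\<lambda>_. 1))" for k
  have F: "integrable Q (F k)" for k
    using f by (simp add: F_def)
  have prod_F: "(\<Prod>k\<in>I. F k (x k)) = (\<Prod>k\<in>J. f (x k))" for x
    using I J by (auto simp: F_def intro!: prod.mono_neutral_cong_right)
  have "(\<Prod>k\<in>I. integral\<^sup>L Q (F k)) = (\<integral>z. f z \<partial>Q) ^ card J"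
  proof -
    have "integral\<^sup>L Q (F k) = (if k \<in> J then \<integral>z. f z \<partial>Q else 1)" for k
      by (simp add: F_def Q.prob_space)
    then show ?thesis
      using I J by (simp add: prod.If_cases Int_absorb1)
  qed
  with product_integrable_prod[of I F] product_integral_prod[of I F] I F
  show "integrable (PiM I (\<lambda>_. Q)) (\<lambda>x. \<Prod>k\<in>J. f (x k))"
    and "(\<integral>x. (\<Prod>k\<in>J. f (x k)) \<partial>PiM I (\<lambda>_. Q)) = (\<integral>z. f z \<partial>Q) ^ card J"
    by (simp_all add: prod_F)
qed

lemma
  fixes Y :: "'z \<Rightarrow> real" and n :: nat
  assumes Q: "prob_space Q" and Y: "integrable Q Y" and Y_sq: "integrable Q (\<lambda>z. (Y z)\<^sup>2)"
    and mean: "(\<integral>z. Y z \<partial>Q) = 0"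
  shows integrable_PiM_sum_coordinates_square:
      "integrable (PiM {..<n} (\<lambda>_. Q)) (\<lambda>zs. (\<Sum>i<n. Y (zs i))\<^sup>2)"
    and integral_PiM_sum_coordinates_square:
      "(\<integral>zs. (\<Sum>i<n. Y (zs i))\<^sup>2 \<partial>PiM {..<n} (\<lambda>_. Q)) = n * (\<integral>z. (Y z)\<^sup>2 \<partial>Q)"
proof -
  let ?P = "PiM {..<n} (\<lambda>_. Q)"
  have Y_ij: "integrable ?P (\<lambda>zs. Y (zs i) * Y (zs j))
      \<and> (\<integral>zs. Y (zs i) * Y (zs j) \<partial>?P) = (if i = j then \<integral>z. (Y z)\<^sup>2 \<partial>Q else 0)"
    if "i < n" "j < n" for i j
  proof (cases "i = j")
    case True
    from integrable_PiM_prod_coordinates[OF Q _ _ Y_sq, of "{..<n}" "{i}"]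
      integral_PiM_prod_coordinates[OF Q _ _ Y_sq, of "{..<n}" "{i}"]
    show ?thesis
      using True that by (simp add: power2_eq_square)
  next
    case False
    from integrable_PiM_prod_coordinates[OF Q _ _ Y, of "{..<n}" "{i, j}"]
      integral_PiM_prod_coordinates[OF Q _ _ Y, of "{..<n}" "{i, j}"]
    show ?thesis
      using False that mean by simp
  qed
  have square_eq: "(\<Sum>i<n. Y (zs i))\<^sup>2 = (\<Sum>i<n. \<Sum>j<n. Y (zs i) * Y (zs j))" for zs
    by (simp add: power2_eq_square sum_product)
  show "integrable ?P (\<lambda>zs. (\<Sum>i<n. Y (zs i))\<^sup>2)"
    unfolding square_eq by (intro Bochner_Integration.integrable_sum) (simp add: Y_ij)
  have "(\<integral>zs. (\<Sum>i<n. Y (zs i))\<^sup>2 \<partial>?P) = (\<Sum>i<n. \<Sum>j<n. \<integral>zs. Y (zs i) * Y (zs j) \<partial>?P)"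
    unfolding square_eq using Y_ij
    by (subst Bochner_Integration.integral_sum) (auto intro!: sum.cong Bochner_Integration.integral_sum)
  also have "\<dots> = n * (\<integral>z. (Y z)\<^sup>2 \<partial>Q)"
    by (simp add: Y_ij)
  finally show "(\<integral>zs. (\<Sum>i<n. Y (zs i))\<^sup>2 \<partial>?P) = n * (\<integral>z. (Y z)\<^sup>2 \<partial>Q)" .
qed

lemma
  fixes X :: "'z \<Rightarrow> real"
  assumes Q: "prob_space Q" and n: "0 < n" and X: "X \<in> borel_measurable Q"
    and X_sq: "integrable Q (\<lambda>z. (X z - m)\<^sup>2)" and mean: "(\<integral>z. X z \<partial>Q) = m"
  shows integrable_sample_mean_square:
      "integrable (PiM {..<n} (\<lambda>_. Q)) (\<lambda>zs. ((1 / real n) * (\<Sum>i<n. X (zs i)))\<^sup>2)"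
    and integral_sample_mean_square:
      "(\<integral>zs. ((1 / real n) * (\<Sum>i<n. X (zs i)))\<^sup>2 \<partial>PiM {..<n} (\<lambda>_. Q))
         = m\<^sup>2 + (\<integral>z. (X z - m)\<^sup>2 \<partial>Q) / n"
proof -
  interpret Q: prob_space Q by fact
  let ?P = "PiM {..<n} (\<lambda>_. Q)"
  interpret P: prob_space ?P by (rule prob_space_PiM) (rule Q)
  define Y where "Y = (\<lambda>z. X z - m)"
  have Y_sq: "integrable Q (\<lambda>z. (Y z)\<^sup>2)"
    using X_sq by (simp add: Y_def)
  have "integrable Q X"
    by (rule Q.norm_diff_square_integrable_imp_integrable[OF X, of m]) (use X_sq in simp)
  then have Y: "integrable Q Y" and EY: "(\<integral>z. Y z \<partial>Q) = 0"
    using mean by (simp_all add: Y_def Q.prob_space)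
  define S where "S = (\<lambda>zs. \<Sum>i<n. Y (zs i))"
  have S: "integrable ?P S" "(\<integral>zs. S zs \<partial>?P) = 0"
    using integrable_PiM_prod_coordinates[OF Q _ _ Y, of "{..<n}" "{i}" for i]
      integral_PiM_prod_coordinates[OF Q _ _ Y, of "{..<n}" "{i}" for i] EY
    by (auto simp: S_def Bochner_Integration.integral_sum)
  have S_sq: "integrable ?P (\<lambda>zs. (S zs)\<^sup>2)"
      "(\<integral>zs. (S zs)\<^sup>2 \<partial>?P) = n * (\<integral>z. (X z - m)\<^sup>2 \<partial>Q)"
    using integrable_PiM_sum_coordinates_square[OF Q Y Y_sq EY, of n]
      integral_PiM_sum_coordinates_square[OF Q Y Y_sq EY, of n]
    by (simp_all add: S_def Y_def)
  have expand: "((1 / real n) * (\<Sum>i<n. X (zs i)))\<^sup>2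
      = m\<^sup>2 + (2 * m / n) * S zs + (S zs)\<^sup>2 / (real n)\<^sup>2" for zs
  proof -
    have "(\<Sum>i<n. X (zs i)) = n * m + S zs"
      by (simp add: S_def Y_def sum_subtractf)
    then show ?thesis
      using n by (simp add: field_simps power2_eq_square)
  qed
  show "integrable ?P (\<lambda>zs. ((1 / real n) * (\<Sum>i<n. X (zs i)))\<^sup>2)"
    unfolding expand using S S_sq by simp
  show "(\<integral>zs. ((1 / real n) * (\<Sum>i<n. X (zs i)))\<^sup>2 \<partial>?P) = m\<^sup>2 + (\<integral>z. (X z - m)\<^sup>2 \<partial>Q) / n"
    unfolding expand using S S_sq n by (simp add: P.prob_space power2_eq_square)
qed

lemma
  fixes g :: "'z \<Rightarrow> 'a::euclidean_space"
  assumes g: "g \<in> borel_measurable M" and g_sq: "integrable M (\<lambda>z. (norm (g z - \<mu>))\<^sup>2)"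
  shows integrable_inner_Basis_diff_square:
      "b \<in> Basis \<Longrightarrow> integrable M (\<lambda>z. (g z \<bullet> b - \<mu> \<bullet> b)\<^sup>2)"
    and sum_Basis_integral_inner_diff_square:
      "(\<Sum>b\<in>Basis. \<integral>z. (g z \<bullet> b - \<mu> \<bullet> b)\<^sup>2 \<partial>M) = (\<integral>z. (norm (g z - \<mu>))\<^sup>2 \<partial>M)"
proof -
  show comp_sq: "integrable M (\<lambda>z. (g z \<bullet> b - \<mu> \<bullet> b)\<^sup>2)" if "b \<in> Basis" for b
  proof (rule Bochner_Integration.integrable_bound[OF g_sq])
    show "(\<lambda>z. (g z \<bullet> b - \<mu> \<bullet> b)\<^sup>2) \<in> borel_measurable M"
      using g by measurable
    have "((g z - \<mu>) \<bullet> b)\<^sup>2 \<le> (norm (g z - \<mu>))\<^sup>2" for z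
      using Basis_le_norm[OF that] by (metis abs_ge_zero power2_abs power_mono)
    then show "AE z in M. norm ((g z \<bullet> b - \<mu> \<bullet> b)\<^sup>2) \<le> norm ((norm (g z - \<mu>))\<^sup>2)"
      by (simp add: inner_diff_left)
  qed
  have "(\<Sum>b\<in>Basis. \<integral>z. (g z \<bullet> b - \<mu> \<bullet> b)\<^sup>2 \<partial>M)
      = (\<integral>z. (\<Sum>b\<in>Basis. (g z \<bullet> b - \<mu> \<bullet> b)\<^sup>2) \<partial>M)"
    using comp_sq by (rule Bochner_Integration.integral_sum[symmetric])
  also have "\<dots> = (\<integral>z. (norm (g z - \<mu>))\<^sup>2 \<partial>M)"
    by (simp only: power2_norm_eq_sum_Basis[of "g _ - \<mu>"] inner_diff_left)
  finally show "(\<Sum>b\<in>Basis. \<integral>z. (g z \<bullet> b - \<mu> \<bullet> b)\<^sup>2 \<partial>M) = (\<integral>z. (norm (g z - \<mu>))\<^sup>2 \<partial>M)" .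
qed

lemma nn_integral_norm_sample_mean_square_le:
  fixes g :: "'z \<Rightarrow> 'a::euclidean_space"
  assumes Q: "prob_space Q" and n: "0 < n" and g: "g \<in> borel_measurable Q"
    and mean: "(\<integral>z. g z \<partial>Q) = \<mu>"
    and variance: "(\<integral>\<^sup>+z. ennreal ((norm (g z - \<mu>))\<^sup>2) \<partial>Q) \<le> ennreal (\<sigma>\<^sup>2)"
  shows "(\<integral>\<^sup>+zs. ennreal ((norm ((1 / real n) *\<^sub>R (\<Sum>i<n. g (zs i))))\<^sup>2) \<partial>PiM {..<n} (\<lambda>_. Q))
    \<le> ennreal ((norm \<mu>)\<^sup>2 + \<sigma>\<^sup>2 / n)"
proof -
  interpret Q: prob_space Q by fact
  let ?P = "PiM {..<n} (\<lambda>_. Q)"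
  have sq_int: "integrable Q (\<lambda>z. (norm (g z - \<mu>))\<^sup>2)"
    using g variance by (intro integrableI_nonneg) (auto simp: le_less_trans)
  have "ennreal (\<integral>z. (norm (g z - \<mu>))\<^sup>2 \<partial>Q) \<le> ennreal (\<sigma>\<^sup>2)"
    using variance by (simp add: nn_integral_eq_integral[OF sq_int, symmetric])
  then have sq_le: "(\<integral>z. (norm (g z - \<mu>))\<^sup>2 \<partial>Q) \<le> \<sigma>\<^sup>2"
    by simp
  have g_int: "integrable Q g"
    using g sq_int by (rule Q.norm_diff_square_integrable_imp_integrable)
  define v where "v b = (\<integral>z. (g z \<bullet> b - \<mu> \<bullet> b)\<^sup>2 \<partial>Q)" for b
  have comp: "integrable ?P (\<lambda>zs. ((1 / real n) * (\<Sum>i<n. g (zs i) \<bullet> b))\<^sup>2)"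
    "(\<integral>zs. ((1 / real n) * (\<Sum>i<n. g (zs i) \<bullet> b))\<^sup>2 \<partial>?P) = (\<mu> \<bullet> b)\<^sup>2 + v b / n"
    if "b \<in> Basis" for b
  proof -
    have "(\<lambda>z. g z \<bullet> b) \<in> borel_measurable Q"
      using g by measurable
    moreover have "(\<integral>z. g z \<bullet> b \<partial>Q) = \<mu> \<bullet> b"
      using g_int mean by simp
    ultimately show "integrable ?P (\<lambda>zs. ((1 / real n) * (\<Sum>i<n. g (zs i) \<bullet> b))\<^sup>2)"
      "(\<integral>zs. ((1 / real n) * (\<Sum>i<n. g (zs i) \<bullet> b))\<^sup>2 \<partial>?P) = (\<mu> \<bullet> b)\<^sup>2 + v b / n"
      using integrable_sample_mean_square[OF Q n _ integrable_inner_Basis_diff_square[OF g sq_int that]]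
        integral_sample_mean_square[OF Q n _ integrable_inner_Basis_diff_square[OF g sq_int that]]
      by (simp_all only: v_def)
  qed
  have sum_v: "(\<Sum>b\<in>Basis. v b) \<le> \<sigma>\<^sup>2"
    using sum_Basis_integral_inner_diff_square[OF g sq_int] sq_le by (simp add: v_def)
  have norm_eq: "(norm ((1 / real n) *\<^sub>R (\<Sum>i<n. g (zs i))))\<^sup>2
      = (\<Sum>b\<in>Basis. ((1 / real n) * (\<Sum>i<n. g (zs i) \<bullet> b))\<^sup>2)" for zs
    by (simp only: power2_norm_eq_sum_Basis inner_scaleR_left inner_sum_left)
  have "(\<integral>\<^sup>+zs. ennreal ((norm ((1 / real n) *\<^sub>R (\<Sum>i<n. g (zs i))))\<^sup>2) \<partial>?P)
      = ennreal (\<Sum>b\<in>Basis. (\<mu> \<bullet> b)\<^sup>2 + v b / n)"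
  proof -
    have "integrable ?P (\<lambda>zs. \<Sum>b\<in>Basis. ((1 / real n) * (\<Sum>i<n. g (zs i) \<bullet> b))\<^sup>2)"
      using comp(1) by (rule Bochner_Integration.integrable_sum)
    then show ?thesis
      unfolding norm_eq using comp
      by (subst nn_integral_eq_integral) (auto simp: Bochner_Integration.integral_sum intro!: sum_nonneg)
  qed
  also have "\<dots> \<le> ennreal ((norm \<mu>)\<^sup>2 + \<sigma>\<^sup>2 / n)"
    using sum_v n
    by (intro ennreal_leI)
      (simp add: power2_norm_eq_sum_Basis[of \<mu>] sum.distrib sum_divide_distrib[symmetric]
        divide_right_mono)
  finally show ?thesis .
qed

lemma (in prob_space) nn_integral_pair_fst_snd_add:
  assumes f: "f \<in> borel_measurable M"
  shows "(\<integral>\<^sup>+y. c * f (fst y) + d * f (snd y) \<partial>(M \<Otimes>\<^sub>M M)) = (c + d) * integral\<^sup>N M f"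
proof -
  have "(\<integral>\<^sup>+y. c * f (fst y) + d * f (snd y) \<partial>(M \<Otimes>\<^sub>M M))
      = (\<integral>\<^sup>+u. \<integral>\<^sup>+v. c * f u + d * f v \<partial>M \<partial>M)"
    using f by (subst nn_integral_fst[symmetric]) simp_all
  also have "\<dots> = (\<integral>\<^sup>+u. c * f u + d * integral\<^sup>N M f \<partial>M)"
    using f by (simp add: nn_integral_add nn_integral_cmult emeasure_space_1)
  also have "\<dots> = (c + d) * integral\<^sup>N M f"
    using f by (simp add: nn_integral_add nn_integral_cmult emeasure_space_1 distrib_right)
  finally show ?thesis .
qed

lemma nn_integral_two_samples_le:
  fixes F :: "'h \<Rightarrow> 'b \<Rightarrow> 'b \<Rightarrow> real" and f :: "'h \<Rightarrow> 'b \<Rightarrow> real"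
  assumes N: "prob_space N" and f: "(\<lambda>(h, u). f h u) \<in> borel_measurable (P \<Otimes>\<^sub>M N)"
    and f_nonneg: "\<And>h u. 0 \<le> f h u" and c: "0 \<le> c" and d: "0 \<le> d"
    and F_le: "\<And>h u v. h \<in> space P \<Longrightarrow> u \<in> space N \<Longrightarrow> v \<in> space N \<Longrightarrow>
      F h u v \<le> c * f h u + d * f h v"
  shows "(\<integral>\<^sup>+(h, u, v). ennreal (F h u v) \<partial>(P \<Otimes>\<^sub>M N \<Otimes>\<^sub>M N))
    \<le> ennreal (c + d) * (\<integral>\<^sup>+h. \<integral>\<^sup>+u. ennreal (f h u) \<partial>N \<partial>P)"
proof -
  interpret N: prob_space N by fact
  interpret NN: pair_prob_space N N by unfold_locales
  define g where "g = (\<lambda>(h, u). ennreal (f h u))"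
  have g: "g \<in> borel_measurable (P \<Otimes>\<^sub>M N)"
    unfolding g_def using f by measurable
  have "ennreal (F h u v) \<le> ennreal c * g (h, u) + ennreal d * g (h, v)"
    if "h \<in> space P" "u \<in> space N" "v \<in> space N" for h u v
    using ennreal_leI[OF F_le[OF that]] c d f_nonneg by (simp add: g_def ennreal_mult)
  then have "(\<integral>\<^sup>+(h, u, v). ennreal (F h u v) \<partial>(P \<Otimes>\<^sub>M N \<Otimes>\<^sub>M N))
      \<le> (\<integral>\<^sup>+x. ennreal c * g (fst x, fst (snd x)) + ennreal d * g (fst x, snd (snd x))
            \<partial>(P \<Otimes>\<^sub>M N \<Otimes>\<^sub>M N))"
    by (intro nn_integral_mono) (auto simp: space_pair_measure)
  also have "\<dots> = (\<integral>\<^sup>+h. \<integral>\<^sup>+y. ennreal c * g (h, fst y) + ennreal d * g (h, snd y) \<partial>(N \<Otimes>\<^sub>M N) \<partial>P)"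
    using g by (subst NN.P.nn_integral_fst[symmetric]) simp_all
  also have "\<dots> = (\<integral>\<^sup>+h. (ennreal c + ennreal d) * \<integral>\<^sup>+u. g (h, u) \<partial>N \<partial>P)"
    by (intro nn_integral_cong N.nn_integral_pair_fst_snd_add measurable_Pair2[OF g])
  also have "\<dots> = ennreal (c + d) * (\<integral>\<^sup>+h. \<integral>\<^sup>+u. ennreal (f h u) \<partial>N \<partial>P)"
    using g c d by (subst nn_integral_cmult) (simp_all add: g_def N.borel_measurable_nn_integral_fst)
  finally show ?thesis .
qed

lemma lipschitz_const_nonneg:
  fixes f :: "'a::{real_normed_vector, perfect_space} \<Rightarrow> 'b::real_normed_vector"
  assumes "\<And>x y. norm (f x - f y) \<le> l * norm (x - y)"
  shows "0 \<le> l"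
proof -
  obtain x :: 'a where "x \<noteq> 0"
    using UNIV_not_singleton by blast
  have "0 \<le> l * norm (x - 0)"
    using assms[of x 0] norm_ge_zero order_trans by blast
  with \<open>x \<noteq> 0\<close> show ?thesis
    by (simp add: zero_le_mult_iff)
qed

lemma power2_norm_le_of_norm_diff_le:
  fixes x y :: "'a::real_normed_vector"
  assumes "norm (x - y) \<le> c"
  shows "(norm x)\<^sup>2 \<le> 2 * (norm y)\<^sup>2 + 2 * c\<^sup>2"
proof -
  have "norm x \<le> norm y + c"
    using norm_triangle_sub[of x y] assms by linarith
  then have "(norm x)\<^sup>2 \<le> (norm y + c)\<^sup>2"
    by (simp add: power_mono)
  also have "\<dots> \<le> 2 * (norm y)\<^sup>2 + 2 * c\<^sup>2"
    using zero_le_power2[of "norm y - c"] by (simp add: power2_eq_square algebra_simps)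
  finally show ?thesis .
qed

lemma norm_minibatch_grad_diff_le:
  assumes lipschitz: "\<And>z \<theta>1 \<theta>2. z \<in> S \<Longrightarrow> norm (G \<theta>1 \<omega> z - G \<theta>2 \<omega> z) \<le> l * norm (\<theta>1 - \<theta>2)"
    and n: "0 < n" and zs: "\<And>i. i < n \<Longrightarrow> zs i \<in> S"
  shows "norm (minibatch_grad G n \<theta>1 \<omega> zs - minibatch_grad G n \<theta>2 \<omega> zs) \<le> l * norm (\<theta>1 - \<theta>2)"
proof -
  have "norm (minibatch_grad G n \<theta>1 \<omega> zs - minibatch_grad G n \<theta>2 \<omega> zs)
      = norm (\<Sum>i<n. G \<theta>1 \<omega> (zs i) - G \<theta>2 \<omega> (zs i)) / n"
    by (simp add: minibatch_grad_def sum_subtractf flip: scaleR_diff_right)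
  also have "\<dots> \<le> (\<Sum>i<n. l * norm (\<theta>1 - \<theta>2)) / n"
    by (intro divide_right_mono order_trans[OF norm_sum] sum_mono lipschitz zs) auto
  also have "\<dots> = l * norm (\<theta>1 - \<theta>2)"
    using n by simp
  finally show ?thesis .
qed

lemma power2_norm_minibatch_grad_extrapolated_le:
  assumes lipschitz: "\<And>z \<theta>1 \<theta>2. z \<in> S \<Longrightarrow> norm (G \<theta>1 \<omega> z - G \<theta>2 \<omega> z) \<le> l * norm (\<theta>1 - \<theta>2)"
    and n: "0 < n" and zs': "\<And>i. i < n \<Longrightarrow> zs' i \<in> S"
  shows "(norm (minibatch_grad G n (\<theta> + \<rho> *\<^sub>R minibatch_grad G n \<theta> \<omega> zs) \<omega> zs'))\<^sup>2
    \<le> 2 * (\<rho> * l)\<^sup>2 * (norm (minibatch_grad G n \<theta> \<omega> zs))\<^sup>2 + 2 * (norm (minibatch_grad G n \<theta> \<omega> zs'))\<^sup>2"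
proof -
  let ?g = "minibatch_grad G n \<theta> \<omega> zs"
  have "norm (minibatch_grad G n (\<theta> + \<rho> *\<^sub>R ?g) \<omega> zs' - minibatch_grad G n \<theta> \<omega> zs')
      \<le> l * norm (\<rho> *\<^sub>R ?g)"
    using norm_minibatch_grad_diff_le[where G = G and \<omega> = \<omega> and zs = zs', OF lipschitz n zs', of "\<theta> + \<rho> *\<^sub>R ?g" \<theta>]
    by simp
  from power2_norm_le_of_norm_diff_le[OF this] show ?thesis
    by (simp add: power_mult_distrib mult_ac add.commute)
qed

lemma measurable_minibatch_grad:
  fixes G :: "'a::topological_space \<Rightarrow> 'w \<Rightarrow> 'z \<Rightarrow> 'b::{real_normed_vector, second_countable_topology}"
  assumes G: "(\<lambda>(x, w, z). G x w z) \<in> borel_measurable (borel \<Otimes>\<^sub>M W \<Otimes>\<^sub>M Q)"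
    and a: "a \<in> borel_measurable N" and w: "w \<in> measurable N W"
    and zs: "zs \<in> measurable N (PiM {..<n} (\<lambda>_. Q))"
  shows "(\<lambda>x. minibatch_grad G n (a x) (w x) (zs x)) \<in> borel_measurable N"
proof -
  have "(\<lambda>x. G (a x) (w x) (zs x i)) \<in> borel_measurable N" if "i < n" for i
  proof -
    have "(\<lambda>x. zs x i) \<in> measurable N Q"
      using measurable_component_singleton[of i "{..<n}" "\<lambda>_. Q"] zs that
      by (simp add: measurable_compose)
    then have "(\<lambda>x. (a x, w x, zs x i)) \<in> measurable N (borel \<Otimes>\<^sub>M W \<Otimes>\<^sub>M Q)"
      using a w by (intro measurable_Pair) auto
    from measurable_compose[OF this G] show ?thesis
      by simp
  qed
  then show ?thesis
    unfolding minibatch_grad_def by (intro borel_measurable_scaleR borel_measurable_const borel_measurable_sum) auto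
qed

lemma measurable_mean_grad:
  fixes G :: "'a::topological_space \<Rightarrow> 'w \<Rightarrow> 'z \<Rightarrow> 'b::{banach, second_countable_topology}"
  assumes Q: "sigma_finite_measure Q"
    and G: "(\<lambda>(x, w, z). G x w z) \<in> borel_measurable (borel \<Otimes>\<^sub>M W \<Otimes>\<^sub>M Q)"
    and a: "a \<in> borel_measurable N" and w: "w \<in> measurable N W"
  shows "(\<lambda>x. \<integral>z. G (a x) (w x) z \<partial>Q) \<in> borel_measurable N"
proof -
  have "(\<lambda>(x, z). (a x, w x, z)) \<in> measurable (N \<Otimes>\<^sub>M Q) (borel \<Otimes>\<^sub>M W \<Otimes>\<^sub>M Q)"
    using a w by measurable
  from measurable_compose[OF this G] have "(\<lambda>(x, z). G (a x) (w x) z) \<in> borel_measurable (N \<Otimes>\<^sub>M Q)"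
    by (simp add: case_prod_beta')
  then show ?thesis
    by (rule sigma_finite_measure.borel_measurable_lebesgue_integral[OF Q])
qed

lemma ennreal_coefficients_le:
  fixes k s :: real and I :: ennreal
  assumes k: "0 \<le> k" and s: "0 \<le> s"
  shows "ennreal (2 * k\<^sup>2 + 2) * (I + ennreal s)
    \<le> ennreal (4 * k\<^sup>2 + 2 * k + 2) * I + ennreal ((5 * k\<^sup>2 + 2) * s)"
proof -
  have "ennreal (2 * k\<^sup>2 + 2) \<le> ennreal (4 * k\<^sup>2 + 2 * k + 2)"
    using k by (intro ennreal_leI) simp
  moreover have "ennreal (2 * k\<^sup>2 + 2) * ennreal s = ennreal ((2 * k\<^sup>2 + 2) * s)"
    using s by (simp add: ennreal_mult)
  moreover have "\<dots> \<le> ennreal ((5 * k\<^sup>2 + 2) * s)"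
    using s by (intro ennreal_leI mult_right_mono) simp_all
  ultimately show ?thesis
    by (simp add: distrib_left add_mono mult_right_mono)
qed

theorem lemmaA3:
  fixes Q :: "'z measure" and W :: "'w measure" and P :: "'h measure"
    and L :: "'a::euclidean_space \<Rightarrow> 'w \<Rightarrow> 'z \<Rightarrow> real"
    and G :: "'a \<Rightarrow> 'w \<Rightarrow> 'z \<Rightarrow> 'a"
    and GL :: "'a \<Rightarrow> 'w \<Rightarrow> 'a"
    and \<theta>t :: "'h \<Rightarrow> 'a" and \<omega>t :: "'h \<Rightarrow> 'w"
    and \<sigma> l \<rho> :: real and M :: nat
  assumes Q: "prob_space Q" and P: "prob_space P"
    and M: "M > 0" and \<rho>: "\<rho> > 0"
    and G_deriv: "\<And>\<theta> \<omega> z. ((\<lambda>x. L x \<omega> z) has_derivative (\<lambda>h. G \<theta> \<omega> z \<bullet> h)) (at \<theta>)"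
    and GL_deriv: "\<And>\<theta> \<omega>. ((\<lambda>x. \<integral>z. L x \<omega> z \<partial>Q) has_derivative (\<lambda>h. GL \<theta> \<omega> \<bullet> h)) (at \<theta>)"
    and unbiased: "\<And>\<theta> \<omega>. (\<integral>z. G \<theta> \<omega> z \<partial>Q) = GL \<theta> \<omega>"
    and variance: "\<And>\<theta> \<omega>. (\<integral>\<^sup>+ z. ennreal ((norm (G \<theta> \<omega> z - GL \<theta> \<omega>))\<^sup>2) \<partial>Q) \<le> ennreal (\<sigma>\<^sup>2)"
    and lipschitz: "\<And>z \<omega> \<theta>1 \<theta>2. z \<in> space Q \<Longrightarrow>
        norm (G \<theta>1 \<omega> z - G \<theta>2 \<omega> z) \<le> l * norm (\<theta>1 - \<theta>2)"
    and G_meas: "(\<lambda>(x, w, z). G x w z) \<in> borel_measurable (borel \<Otimes>\<^sub>M W \<Otimes>\<^sub>M Q)"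
    and \<theta>t_meas: "\<theta>t \<in> borel_measurable P"
    and \<omega>t_meas: "\<omega>t \<in> measurable P W"
  shows "(\<integral>\<^sup>+ (h, zs1, zs2).
            ennreal ((norm (minibatch_grad G M
               (\<theta>t h + \<rho> *\<^sub>R minibatch_grad G M (\<theta>t h) (\<omega>t h) zs1) (\<omega>t h) zs2))\<^sup>2)
          \<partial>(P \<Otimes>\<^sub>M PiM {..<M} (\<lambda>_. Q) \<Otimes>\<^sub>M PiM {..<M} (\<lambda>_. Q)))
     \<le> ennreal (4 * \<rho>\<^sup>2 * l\<^sup>2 + 2 * \<rho> * l + 2) *
          (\<integral>\<^sup>+ h. ennreal ((norm (GL (\<theta>t h) (\<omega>t h)))\<^sup>2) \<partial>P)
       + ennreal ((5 * \<rho>\<^sup>2 * l\<^sup>2 + 2) * \<sigma>\<^sup>2 / real M)"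
proof -
  interpret Q: prob_space Q by fact
  interpret P: prob_space P by fact
  let ?Pi = "PiM {..<M} (\<lambda>_. Q)"
  let ?A = "\<lambda>h zs. (norm (minibatch_grad G M (\<theta>t h) (\<omega>t h) zs))\<^sup>2"
  let ?I = "\<integral>\<^sup>+ h. ennreal ((norm (GL (\<theta>t h) (\<omega>t h)))\<^sup>2) \<partial>P"
  obtain z0 where "z0 \<in> space Q"
    using Q.not_empty by blast
  then have "0 \<le> \<rho> * l"
    using \<rho> lipschitz by (simp add: lipschitz_const_nonneg[of "\<lambda>\<theta>. G \<theta> undefined z0"])
  have "(\<lambda>(h, zs). minibatch_grad G M (\<theta>t h) (\<omega>t h) zs) \<in> borel_measurable (P \<Otimes>\<^sub>M ?Pi)"
    using measurable_minibatch_grad[OF G_meas, of "\<lambda>x. \<theta>t (fst x)" _ "\<lambda>x. \<omega>t (fst x)" snd]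
      \<theta>t_meas \<omega>t_meas by (simp add: case_prod_beta')
  then have A_meas: "(\<lambda>(h, zs). ?A h zs) \<in> borel_measurable (P \<Otimes>\<^sub>M ?Pi)"
    by measurable
  have batch: "(\<integral>\<^sup>+zs. ennreal (?A h zs) \<partial>?Pi)
      \<le> ennreal ((norm (GL (\<theta>t h) (\<omega>t h)))\<^sup>2) + ennreal (\<sigma>\<^sup>2 / M)" if "h \<in> space P" for h
  proof -
    have "(\<lambda>z. G (\<theta>t h) (\<omega>t h) z) \<in> borel_measurable Q"
      using measurable_Pair2[OF measurable_Pair2[OF G_meas], of "\<theta>t h" "\<omega>t h"]
        measurable_space[OF \<omega>t_meas that] by simp
    from nn_integral_norm_sample_mean_square_le[OF Q M this unbiased variance] show ?thesis
      by (simp add: minibatch_grad_def)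
  qed
  have "(\<lambda>h. GL (\<theta>t h) (\<omega>t h)) \<in> borel_measurable P"
    using measurable_mean_grad[OF Q.sigma_finite_measure_axioms G_meas \<theta>t_meas \<omega>t_meas]
    by (simp add: unbiased)
  then have I_split: "(\<integral>\<^sup>+ h. ennreal ((norm (GL (\<theta>t h) (\<omega>t h)))\<^sup>2) + ennreal (\<sigma>\<^sup>2 / M) \<partial>P)
      = ?I + ennreal (\<sigma>\<^sup>2 / M)"
    by (simp add: nn_integral_add P.emeasure_space_1)
  have "(\<integral>\<^sup>+ (h, zs1, zs2).
            ennreal ((norm (minibatch_grad G M
               (\<theta>t h + \<rho> *\<^sub>R minibatch_grad G M (\<theta>t h) (\<omega>t h) zs1) (\<omega>t h) zs2))\<^sup>2)
          \<partial>(P \<Otimes>\<^sub>M ?Pi \<Otimes>\<^sub>M ?Pi))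
      \<le> ennreal (2 * (\<rho> * l)\<^sup>2 + 2) * (\<integral>\<^sup>+h. \<integral>\<^sup>+zs. ennreal (?A h zs) \<partial>?Pi \<partial>P)"
    using lipschitz M
    by (intro nn_integral_two_samples_le[OF prob_space_PiM[OF Q] A_meas]
        power2_norm_minibatch_grad_extrapolated_le[where S = "space Q"]) (auto simp: space_PiM)
  also have "\<dots> \<le> ennreal (2 * (\<rho> * l)\<^sup>2 + 2) * (?I + ennreal (\<sigma>\<^sup>2 / M))"
    unfolding I_split[symmetric] by (intro mult_left_mono nn_integral_mono batch) simp_all
  also have "\<dots> \<le> ennreal (4 * \<rho>\<^sup>2 * l\<^sup>2 + 2 * \<rho> * l + 2) * ?I
      + ennreal ((5 * \<rho>\<^sup>2 * l\<^sup>2 + 2) * \<sigma>\<^sup>2 / real M)"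
    using ennreal_coefficients_le[OF \<open>0 \<le> \<rho> * l\<close>, of "\<sigma>\<^sup>2 / M" ?I]
    by (simp add: power_mult_distrib mult.assoc)
  finally show ?thesis .
qed

end
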